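(* Let $R$ be a supertropical semiring such that $eR$ is a semifield with $\mathcal G\neq\{e\}$, let $(q,b)$ be a quadratic pair on an $R$-module $V$, and let $x,y,w\in V$ be anisotropic vectors (so that $x+y$ is also anisotropic). Then: (a) $\operatorname{CS}(x+y,w)\le \operatorname{CS}(x,w)+\operatorname{CS}(y,w)$ in $eR$. (b) If $q(x+y)\not\cong_\nu q(x)+q(y)$ and $\operatorname{CS}(x,w)+\operatorname{CS}(y,w)\neq 0$, then $\operatorname{CS}(x+y,w)<\operatorname{CS}(x,w)+\operatorname{CS}(y,w)$. (c) If $q(x+y)\cong_\nu q(x)+q(y)$ and at least one of the following holds: (c1) $e q(x)\cdot\operatorname{CS}(y,w)=eq(y)\cdot\operatorname{CS}(x,w)$; (c2) $\operatorname{CS}(x,w)=\operatorname{CS}(y,w)$; (c3) $q(x)\cong_\nu q(y)$; then $\operatorname{CS}(x+y,w)=\operatorname{CS}(x,w)+\operatorname{CS}(y,w)$.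
   Context: All semirings are commutative with $1$. A semiring $R$ is supertropical if $e:=1+1$ satisfies $e+e=e$ and, for all $x,y\in R$: if $ex\neq ey$ then $x+y\in\{x,y\}$, and if $ex=ey$ then $x+y=ey$. $eR$ is totally ordered by $u\le v\iff u+v=v$; write $x\le_\nu y$, $x\cong_\nu y$, $x<_\nu y$ for $ex\le ey$, $ex=ey$, $ex<ey$. $\mathcal G=eR\setminus\{0\}$; "$eR$ is a semifield" means every element of $\mathcal G$ is invertible in $eR$. A quadratic form on an $R$-module $V$ is a map $q:V\to R$ with $q(ax)=a^2q(x)$ such that some symmetric bilinear $b$ satisfies $q(x+y)=q(x)+q(y)+b(x,y)$; $(q,b)$ is a quadratic pair. A vector $x\in V$ is anisotropic if $x\ne0$ and $q(x)\neq 0$. For anisotropic $x,y$, the CS-ratio is $\operatorname{CS}(x,y):=\dfrac{e\,b(x,y)^2}{e\,q(x)q(y)}\in eR$ (quotient in the semifield $eR$). *)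

theory Defs
  imports Main
begin

definition ghost_e :: "'a::comm_semiring_1" where
  "ghost_e = 1 + 1"

definition supertropical :: "'a::comm_semiring_1 itself \<Rightarrow> bool" where
  "supertropical _ \<longleftrightarrow>
     (ghost_e::'a) + ghost_e = ghost_e \<and>
     (\<forall>x y::'a. (ghost_e * x \<noteq> ghost_e * y \<longrightarrow> x + y \<in> {x, y}) \<and>
                (ghost_e * x = ghost_e * y \<longrightarrow> x + y = ghost_e * y))"

definition ghost_ideal :: "'a::comm_semiring_1 set" where
  "ghost_ideal = range (\<lambda>a. ghost_e * a)"

definition tangible_group :: "'a::comm_semiring_1 set" where
  "tangible_group = ghost_ideal - {0}"

definition eR_semifield :: "'a::comm_semiring_1 itself \<Rightarrow> bool" where
  "eR_semifield _ \<longleftrightarrow>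
     (\<forall>g\<in>(tangible_group::'a set). \<exists>h\<in>ghost_ideal. g * h = ghost_e)"

definition e_inv :: "'a::comm_semiring_1 \<Rightarrow> 'a" where
  "e_inv g = (SOME h. h \<in> ghost_ideal \<and> g * h = ghost_e)"

definition eR_le :: "'a::comm_semiring_1 \<Rightarrow> 'a \<Rightarrow> bool" where
  "eR_le u v \<longleftrightarrow> u + v = v"

definition eR_less :: "'a::comm_semiring_1 \<Rightarrow> 'a \<Rightarrow> bool" where
  "eR_less u v \<longleftrightarrow> eR_le u v \<and> u \<noteq> v"

definition nu_equiv :: "'a::comm_semiring_1 \<Rightarrow> 'a \<Rightarrow> bool" where
  "nu_equiv x y \<longleftrightarrow> ghost_e * x = ghost_e * y"

definition semimodule :: "('a::comm_semiring_1 \<Rightarrow> 'v::comm_monoid_add \<Rightarrow> 'v) \<Rightarrow> bool" where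
  "semimodule sm \<longleftrightarrow>
     (\<forall>a x y. sm a (x + y) = sm a x + sm a y) \<and>
     (\<forall>a b x. sm (a + b) x = sm a x + sm b x) \<and>
     (\<forall>a b x. sm (a * b) x = sm a (sm b x)) \<and>
     (\<forall>x. sm 1 x = x) \<and>
     (\<forall>x. sm 0 x = 0) \<and>
     (\<forall>a. sm a 0 = 0)"

definition symmetric_bilinear ::
  "('a::comm_semiring_1 \<Rightarrow> 'v::comm_monoid_add \<Rightarrow> 'v) \<Rightarrow> ('v \<Rightarrow> 'v \<Rightarrow> 'a) \<Rightarrow> bool" where
  "symmetric_bilinear sm b \<longleftrightarrow>
     (\<forall>x y. b x y = b y x) \<and>
     (\<forall>x x' y. b (x + x') y = b x y + b x' y) \<and>
     (\<forall>a x y. b (sm a x) y = a * b x y)"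

definition quadratic_pair ::
  "('a::comm_semiring_1 \<Rightarrow> 'v::comm_monoid_add \<Rightarrow> 'v) \<Rightarrow> ('v \<Rightarrow> 'a) \<Rightarrow> ('v \<Rightarrow> 'v \<Rightarrow> 'a) \<Rightarrow> bool" where
  "quadratic_pair sm q b \<longleftrightarrow>
     (\<forall>a x. q (sm a x) = a\<^sup>2 * q x) \<and>
     symmetric_bilinear sm b \<and>
     (\<forall>x y. q (x + y) = q x + q y + b x y)"

definition anisotropic :: "('v::comm_monoid_add \<Rightarrow> 'a::comm_semiring_1) \<Rightarrow> 'v \<Rightarrow> bool" where
  "anisotropic q x \<longleftrightarrow> x \<noteq> 0 \<and> q x \<noteq> 0"

definition CS :: "('v \<Rightarrow> 'a::comm_semiring_1) \<Rightarrow> ('v \<Rightarrow> 'v \<Rightarrow> 'a) \<Rightarrow> 'v \<Rightarrow> 'v \<Rightarrow> 'a" where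
  "CS q b x y = ghost_e * (b x y)\<^sup>2 * e_inv (ghost_e * q x * q y)"

end

theory Submission
  imports Defs
begin

text \<open>The ghost ideal \<open>eR\<close> is a totally ordered semifield with unit \<open>e\<close> in which
\<open>u + v = max u v\<close>. Put \<open>X = e q(x)\<close>, \<open>Y = e q(y)\<close>, \<open>G = e b(x,y)\<close>, so that
\<open>Z = e q(x+y) = X + Y + G\<close>, and \<open>a = e b(x,w)\<^sup>2/e q(w)\<close>, \<open>c = e b(y,w)\<^sup>2/e q(w)\<close>. Because
\<open>(u + v)\<^sup>2 = u\<^sup>2 + v\<^sup>2\<close> in \<open>eR\<close>, the three CS-ratios are \<open>a/X\<close>, \<open>c/Y\<close> and \<open>(a + c)/Z\<close>.
Since \<open>X, Y \<le> Z\<close> and inversion is antitone, \<open>(a + c)/Z = a/Z + c/Z \<le> a/X + c/Y\<close>. When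
\<open>\<nu>\<close>-equivalence fails, \<open>Z = G\<close> lies strictly above \<open>X\<close> and \<open>Y\<close>, so each summand drops
strictly unless it vanishes. When \<open>Z = X + Y\<close>, say \<open>Z = X \<ge> Y\<close>, we have \<open>a/X = a/Z\<close>, and
each of (c1)--(c3) makes \<open>c/Y\<close> at most \<open>a/X\<close> or equal to \<open>c/Z\<close>.\<close>

text \<open>Membership in \<open>eR\<close>: as \<open>e e = e\<close>, \<open>eR\<close> is the set of fixed points of \<open>(*) e\<close>.\<close>
definition ghost :: "'a::comm_semiring_1 \<Rightarrow> bool" where
  "ghost u \<longleftrightarrow> ghost_e * u = u"

lemma eR_le_antisym: "eR_le u v \<Longrightarrow> eR_le v u \<Longrightarrow> u = v"
  unfolding eR_le_def by (metis add.commute)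

lemma eR_le_trans: "eR_le u v \<Longrightarrow> eR_le v w \<Longrightarrow> eR_le u w"
  unfolding eR_le_def by (metis add.assoc)

lemma eR_le_mult_right: "eR_le u v \<Longrightarrow> eR_le (u * t) (v * t)"
  unfolding eR_le_def by (metis distrib_right)

lemma eR_le_mult_left: "eR_le u v \<Longrightarrow> eR_le (t * u) (t * v)"
  using eR_le_mult_right by (metis mult.commute)

lemma eR_le_add_mono: "eR_le u u' \<Longrightarrow> eR_le v v' \<Longrightarrow> eR_le (u + v) (u' + v')"
  unfolding eR_le_def by (metis add.assoc add.commute)

lemma eR_add_le: "eR_le u w \<Longrightarrow> eR_le v w \<Longrightarrow> eR_le (u + v) w"
  unfolding eR_le_def by (metis add.assoc)

lemma eR_le_add_eq: "eR_le u v \<Longrightarrow> u + v = v"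
  unfolding eR_le_def .

lemma eR_le_zero: "eR_le u 0 \<Longrightarrow> u = 0"
  unfolding eR_le_def by simp

lemma quadratic_pair_bilinear_add_left:
  "quadratic_pair sm q b \<Longrightarrow> b (x + y) w = b x w + b y w"
  unfolding quadratic_pair_def symmetric_bilinear_def by blast

lemma quadratic_pair_ghost_e_add:
  "quadratic_pair sm q b \<Longrightarrow>
    ghost_e * q (x + y) = ghost_e * q x + ghost_e * q y + ghost_e * b x y"
  unfolding quadratic_pair_def by (simp add: distrib_left)

locale supertropical_semifield =
  fixes T :: "'a::comm_semiring_1 itself"
  assumes supertropical: "supertropical T"
    and semifield: "eR_semifield T"
begin

lemma ghost_e_add_self: "ghost_e + ghost_e = (ghost_e::'a)"
  using supertropical unfolding supertropical_def by blast

lemma add_of_not_nu_equiv: "ghost_e * x \<noteq> ghost_e * y \<Longrightarrow> x + y = x \<or> x + y = (y::'a)"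
  using supertropical unfolding supertropical_def by blast

lemma add_of_nu_equiv: "ghost_e * x = ghost_e * y \<Longrightarrow> x + y = ghost_e * (y::'a)"
  using supertropical unfolding supertropical_def by blast

lemma ghost_e_mult_self: "ghost_e * ghost_e = (ghost_e::'a)"
  by (metis ghost_e_add_self ghost_e_def distrib_left mult_1_right)

lemma ghost_e_mult_eq_0_iff: "ghost_e * a = 0 \<longleftrightarrow> a = (0::'a)"
  using add_of_nu_equiv[of a 0] by auto

lemma ghost_ghost_e_mult: "ghost (ghost_e * (a::'a))"
  unfolding ghost_def by (simp add: mult.assoc[symmetric] ghost_e_mult_self)

lemma ghost_mult: "ghost u \<Longrightarrow> ghost (u * (v::'a))"
  unfolding ghost_def by (metis mult.assoc)

lemma ghost_add: "ghost u \<Longrightarrow> ghost v \<Longrightarrow> ghost (u + (v::'a))"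
  unfolding ghost_def by (simp add: distrib_left)

lemma ghost_mult_ghost_e: "ghost u \<Longrightarrow> u * ghost_e = (u::'a)"
  unfolding ghost_def by (simp add: mult.commute)

lemma ghost_add_self: "ghost u \<Longrightarrow> u + u = (u::'a)"
  unfolding ghost_def by (metis ghost_e_def distrib_right mult_1 mult.commute)

lemma ghost_add_cases: "ghost u \<Longrightarrow> ghost v \<Longrightarrow> u + v = u \<or> u + v = (v::'a)"
  by (metis add_of_not_nu_equiv ghost_def ghost_add_self)

lemma eR_le_refl: "ghost u \<Longrightarrow> eR_le u (u::'a)"
  unfolding eR_le_def by (rule ghost_add_self)

lemma eR_le_total: "ghost u \<Longrightarrow> ghost v \<Longrightarrow> eR_le u v \<or> eR_le v (u::'a)"
  unfolding eR_le_def by (metis ghost_add_cases add.commute)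

lemma eR_le_add_left: "ghost u \<Longrightarrow> eR_le u (u + (v::'a))"
  unfolding eR_le_def by (metis add.assoc ghost_add_self)

lemma eR_le_add_right: "ghost v \<Longrightarrow> eR_le v (u + (v::'a))"
  using eR_le_add_left by (metis add.commute)

lemma e_inv_inverse: "ghost u \<Longrightarrow> u \<noteq> 0 \<Longrightarrow> ghost (e_inv u) \<and> u * e_inv u = (ghost_e::'a)"
proof -
  assume "ghost u" "u \<noteq> 0"
  then have "u \<in> tangible_group"
    unfolding tangible_group_def ghost_ideal_def ghost_def by (metis DiffI singletonD rangeI)
  then have "\<exists>h. h \<in> ghost_ideal \<and> u * h = ghost_e"
    using semifield unfolding eR_semifield_def by blast
  then have "e_inv u \<in> ghost_ideal \<and> u * e_inv u = ghost_e"
    unfolding e_inv_def by (rule someI_ex)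
  then show ?thesis unfolding ghost_ideal_def using ghost_ghost_e_mult by auto
qed

lemma e_inv_unique:
  assumes "ghost u" "u \<noteq> 0" "ghost h" "u * h = (ghost_e::'a)"
  shows "e_inv u = h"
  using e_inv_inverse[OF assms(1,2)] assms(3,4)
  by (metis ghost_mult_ghost_e mult.assoc mult.commute)

lemma ghost_mult_nonzero:
  assumes "ghost u" "u \<noteq> 0" "ghost v" "v \<noteq> (0::'a)"
  shows "u * v \<noteq> 0"
proof
  assume "u * v = 0"
  moreover have "e_inv u * (u * v) = v"
    using e_inv_inverse[OF assms(1,2)] assms(3)
    by (simp add: mult.assoc[symmetric] mult.commute[of "e_inv u"] ghost_def)
  ultimately show False using assms(4) by simp
qed

lemma e_inv_mult:
  assumes "ghost u" "u \<noteq> 0" "ghost v" "v \<noteq> (0::'a)"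
  shows "e_inv (u * v) = e_inv u * e_inv v"
proof (rule e_inv_unique)
  show "u * v * (e_inv u * e_inv v) = ghost_e"
    using e_inv_inverse[OF assms(1,2)] e_inv_inverse[OF assms(3,4)] ghost_e_mult_self
    by (metis mult.assoc mult.left_commute)
  show "ghost (u * v)" using assms(1) by (rule ghost_mult)
  show "u * v \<noteq> 0" using ghost_mult_nonzero[OF assms] .
  show "ghost (e_inv u * e_inv v)" using e_inv_inverse[OF assms(1,2)] by (simp add: ghost_mult)
qed

lemma eR_le_mult_cancel:
  assumes "ghost u" "ghost v" "ghost t" "t \<noteq> 0" "eR_le (u * t) (v * (t::'a))"
  shows "eR_le u v"
  using eR_le_mult_right[OF assms(5), of "e_inv t"] e_inv_inverse[OF assms(3,4)] assms(1,2)
  by (simp add: mult.assoc ghost_mult_ghost_e)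

lemma ghost_mult_cancel:
  "ghost u \<Longrightarrow> ghost v \<Longrightarrow> ghost t \<Longrightarrow> t \<noteq> 0 \<Longrightarrow> u * t = v * (t::'a) \<Longrightarrow> u = v"
  by (metis eR_le_mult_cancel eR_le_refl eR_le_antisym ghost_mult)

lemma e_inv_antimono:
  assumes "ghost X" "X \<noteq> 0" "ghost Z" "Z \<noteq> 0" "eR_le X (Z::'a)"
  shows "eR_le (e_inv Z) (e_inv X)"
proof -
  have "eR_le (X * e_inv X * e_inv Z) (Z * e_inv Z * e_inv X)"
    using eR_le_mult_right[OF assms(5), of "e_inv X * e_inv Z"] by (simp add: mult_ac)
  then show ?thesis
    using e_inv_inverse[OF assms(1,2)] e_inv_inverse[OF assms(3,4)]
    by (simp add: mult.commute[of ghost_e] ghost_def)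
qed

lemma e_inv_inj:
  assumes "ghost X" "X \<noteq> 0" "ghost Z" "Z \<noteq> 0" "e_inv X = (e_inv Z::'a)"
  shows "X = Z"
  using e_inv_inverse[OF assms(1,2)] e_inv_inverse[OF assms(3,4)] assms(5) assms(1,3)
  by (metis ghost_mult_ghost_e mult.assoc mult.commute)

lemma ghost_square_add_of_le:
  assumes "eR_le A (C::'a)"
  shows "(A + C) * (A + C) = A * A + C * C"
proof -
  have "eR_le (A * A) (C * C)"
    using eR_le_trans[OF eR_le_mult_right[OF assms] eR_le_mult_left[OF assms]] .
  then show ?thesis using assms by (simp add: eR_le_add_eq)
qed

lemma ghost_square_add:
  assumes "ghost A" "ghost (C::'a)"
  shows "(A + C) * (A + C) = A * A + C * C"
  using eR_le_total[OF assms] ghost_square_add_of_le[of A C] ghost_square_add_of_le[of C A]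
  by (auto simp: add.commute)

lemma eR_less_add_mono:
  assumes g: "ghost p1" "ghost p2" "ghost s1" "ghost (s2::'a)"
    and le: "eR_le p1 s1" "eR_le p2 s2"
    and strict: "p1 = s1 \<Longrightarrow> s1 = 0" "p2 = s2 \<Longrightarrow> s2 = 0"
    and nz: "s1 + s2 \<noteq> 0"
  shows "eR_less (p1 + p2) (s1 + s2)"
proof -
  have s_le: "eR_le s1 (s1 + s2)" "eR_le s2 (s1 + s2)"
    using g eR_le_add_left eR_le_add_right by auto
  have "p1 + p2 \<noteq> s1 + s2"
  proof
    assume eq: "p1 + p2 = s1 + s2"
    from ghost_add_cases[OF g(1,2)] show False
    proof
      assume p: "p1 + p2 = p1"
      then have "eR_le s1 p1" using s_le(1) eq by simp
      then have "p1 = s1" using le(1) eR_le_antisym by blast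
      then show False using strict(1) eq p nz by simp
    next
      assume p: "p1 + p2 = p2"
      then have "eR_le s2 p2" using s_le(2) eq by simp
      then have "p2 = s2" using le(2) eR_le_antisym by blast
      then show False using strict(2) eq p nz by simp
    qed
  qed
  then show ?thesis unfolding eR_less_def using eR_le_add_mono[OF le] by simp
qed

lemma eR_le_sum3:
  assumes "ghost X" "ghost Y" "ghost (G::'a)"
  shows "eR_le (X + Y) (X + Y + G)" "eR_le X (X + Y + G)" "eR_le Y (X + Y + G)"
proof -
  show XYZ: "eR_le (X + Y) (X + Y + G)" using assms by (simp add: eR_le_add_left ghost_add)
  show "eR_le X (X + Y + G)" using eR_le_trans[OF eR_le_add_left[OF assms(1)] XYZ] .
  show "eR_le Y (X + Y + G)" using eR_le_trans[OF eR_le_add_right[OF assms(2)] XYZ] .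
qed

lemma ratio_sum_le:
  assumes g: "ghost a" "ghost c" "ghost X" "ghost Y" "ghost G"
    and nz: "X \<noteq> 0" "Y \<noteq> 0"
  shows "eR_le ((a + c) * e_inv (X + Y + G)) (a * e_inv X + c * e_inv (Y::'a))"
proof -
  have gZ: "ghost (X + Y + G)" using g by (simp add: ghost_add)
  have nzZ: "X + Y + G \<noteq> 0" using eR_le_sum3(2)[OF g(3-5)] nz(1) by (metis eR_le_zero)
  show ?thesis
    unfolding distrib_right
    using eR_le_add_mono[OF eR_le_mult_left[OF e_inv_antimono[OF g(3) nz(1) gZ nzZ]]
        eR_le_mult_left[OF e_inv_antimono[OF g(4) nz(2) gZ nzZ]]] eR_le_sum3[OF g(3-5)]
    by blast
qed

lemma mult_e_inv_eq_imp_zero: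
  assumes "ghost a" "ghost X" "ghost Z" "X \<noteq> 0" "Z \<noteq> 0" "X \<noteq> Z"
    and "a * e_inv Z = a * e_inv (X::'a)"
  shows "a * e_inv X = 0"
proof (rule ccontr)
  assume "a * e_inv X \<noteq> 0"
  then have "a \<noteq> 0" by auto
  moreover have "e_inv Z * a = e_inv X * a"
    using assms(7) by (simp only: mult.commute[of _ a])
  moreover have "ghost (e_inv Z)" "ghost (e_inv X)"
    using e_inv_inverse[OF assms(3,5)] e_inv_inverse[OF assms(2,4)] by simp_all
  ultimately have "e_inv Z = e_inv X"
    using ghost_mult_cancel[of "e_inv Z" "e_inv X" a] assms(1) by blast
  then show False using assms(6) e_inv_inj[OF assms(2,4,3,5)] by simp
qed

lemma ratio_sum_less:
  assumes g: "ghost a" "ghost c" "ghost X" "ghost Y" "ghost G"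
    and nz: "X \<noteq> 0" "Y \<noteq> 0"
    and Z: "Z = X + Y + G" and not_nu: "Z \<noteq> X + Y"
    and sum_nz: "a * e_inv X + c * e_inv Y \<noteq> (0::'a)"
  shows "eR_less ((a + c) * e_inv Z) (a * e_inv X + c * e_inv Y)"
proof -
  have gZ: "ghost Z" using g Z by (simp add: ghost_add)
  have XYZ: "eR_le (X + Y) Z" and XZ: "eR_le X Z" and YZ: "eR_le Y Z"
    unfolding Z using eR_le_sum3[OF g(3-5)] by blast+
  have nzZ: "Z \<noteq> 0" using XZ nz(1) by (metis eR_le_zero)
  have "X \<noteq> Z"
  proof
    assume "X = Z"
    then have "eR_le Z (X + Y)" using eR_le_add_left[OF g(3)] by simp
    then show False using XYZ not_nu eR_le_antisym by blast
  qed
  have "Y \<noteq> Z"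
  proof
    assume "Y = Z"
    then have "eR_le Z (X + Y)" using eR_le_add_right[OF g(4)] by simp
    then show False using XYZ not_nu eR_le_antisym by blast
  qed
  have gi: "ghost (e_inv X)" "ghost (e_inv Y)" "ghost (e_inv Z)"
    using e_inv_inverse[OF g(3) nz(1)] e_inv_inverse[OF g(4) nz(2)] e_inv_inverse[OF gZ nzZ]
    by simp_all
  show ?thesis
    unfolding distrib_right
  proof (rule eR_less_add_mono)
    show "eR_le (a * e_inv Z) (a * e_inv X)"
      using e_inv_antimono[OF g(3) nz(1) gZ nzZ XZ] by (rule eR_le_mult_left)
    show "eR_le (c * e_inv Z) (c * e_inv Y)"
      using e_inv_antimono[OF g(4) nz(2) gZ nzZ YZ] by (rule eR_le_mult_left)
    show "a * e_inv X = 0" if "a * e_inv Z = a * e_inv X"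
      using mult_e_inv_eq_imp_zero[OF g(1,3) gZ nz(1) nzZ \<open>X \<noteq> Z\<close> that] .
    show "c * e_inv Y = 0" if "c * e_inv Z = c * e_inv Y"
      using mult_e_inv_eq_imp_zero[OF g(2,4) gZ nz(2) nzZ \<open>Y \<noteq> Z\<close> that] .
  qed (use g gi sum_nz in \<open>simp_all add: ghost_mult\<close>)
qed

lemma ratio_sum_ge_of_le:
  assumes g: "ghost a" "ghost c" "ghost X" "ghost Y"
    and nz: "X \<noteq> 0" "Y \<noteq> 0" and YX: "eR_le Y X"
    and cond: "X * (c * e_inv Y) = Y * (a * e_inv X) \<or> a * e_inv X = c * e_inv Y \<or> X = (Y::'a)"
  shows "eR_le (a * e_inv X + c * e_inv Y) ((a + c) * e_inv (X + Y))"
proof -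
  have XY: "X + Y = X" using YX by (simp add: eR_le_def add.commute)
  note iX = e_inv_inverse[OF g(3) nz(1)] and iY = e_inv_inverse[OF g(4) nz(2)]
  have gaX: "ghost (a * e_inv X)" and gcX: "ghost (c * e_inv X)"
    using g(1,2) by (simp_all add: ghost_mult)
  have c1: "eR_le (c * e_inv Y) (a * e_inv X)"
    if "X * (c * e_inv Y) = Y * (a * e_inv X)"
  proof -
    have "(e_inv X * X) * (c * e_inv Y) = ghost_e * c * e_inv Y"
      using iX by (simp add: mult.commute[of "e_inv X"] mult.assoc)
    then have "c * e_inv Y = (e_inv X * X) * (c * e_inv Y)"
      using g(2) by (simp add: ghost_def)
    also have "\<dots> = (Y * e_inv X) * (a * e_inv X)"
      using arg_cong[OF that, of "(*) (e_inv X)"] by (simp add: mult_ac)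
    also have "eR_le \<dots> ((X * e_inv X) * (a * e_inv X))"
      using YX by (intro eR_le_mult_right)
    also have "(X * e_inv X) * (a * e_inv X) = a * e_inv X"
      using iX g(1) by (simp add: ghost_def mult.assoc[symmetric])
    finally show ?thesis .
  qed
  have "eR_le (c * e_inv Y) (a * e_inv X + c * e_inv X)"
    using cond
  proof (elim disjE)
    assume "X * (c * e_inv Y) = Y * (a * e_inv X)"
    then show ?thesis using eR_le_trans[OF c1 eR_le_add_left[OF gaX]] by blast
  next
    assume "a * e_inv X = c * e_inv Y"
    then show ?thesis using eR_le_add_left[OF gaX, of "c * e_inv X"] by simp
  next
    assume "X = Y"
    then show ?thesis using eR_le_add_right[OF gcX, of "a * e_inv X"] by simp
  qed
  then show ?thesis
    unfolding XY distrib_right by (rule eR_add_le[OF eR_le_add_left[OF gaX]])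
qed

lemma ratio_sum_eq:
  assumes g: "ghost a" "ghost c" "ghost X" "ghost Y"
    and nz: "X \<noteq> 0" "Y \<noteq> 0"
    and cond: "X * (c * e_inv Y) = Y * (a * e_inv X) \<or> a * e_inv X = c * e_inv Y \<or> X = (Y::'a)"
  shows "(a + c) * e_inv (X + Y) = a * e_inv X + c * e_inv Y"
proof -
  have "eR_le (a * e_inv X + c * e_inv Y) ((a + c) * e_inv (X + Y))"
  proof (cases "eR_le Y X")
    case True
    then show ?thesis using ratio_sum_ge_of_le[OF g nz _ cond] by blast
  next
    case False
    then have "eR_le X Y" using eR_le_total[OF g(3,4)] by blast
    moreover have "Y * (a * e_inv X) = X * (c * e_inv Y) \<or> c * e_inv Y = a * e_inv X \<or> Y = X"
      using cond by (elim disjE) simp_all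
    ultimately have "eR_le (c * e_inv Y + a * e_inv X) ((c + a) * e_inv (Y + X))"
      by (rule ratio_sum_ge_of_le[OF g(2,1,4,3) nz(2,1)])
    then show ?thesis by (simp add: add.commute)
  qed
  moreover have "eR_le ((a + c) * e_inv (X + Y)) (a * e_inv X + c * e_inv Y)"
    using ratio_sum_le[OF g _ nz, of 0] by (simp add: ghost_def)
  ultimately show ?thesis using eR_le_antisym by blast
qed

lemma CS_eq_ratio:
  assumes "q x \<noteq> 0" "q w \<noteq> (0::'a)"
  shows "CS q b x w
    = (ghost_e * b x w) * (ghost_e * b x w) * e_inv (ghost_e * q w) * e_inv (ghost_e * q x)"
proof -
  have ghost_e_mult2: "(ghost_e * u) * (ghost_e * v) = ghost_e * (u * v)" for u v :: 'a
  proof -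
    have "(ghost_e * u) * (ghost_e * v) = (ghost_e * ghost_e) * (u * v)" by (simp add: mult_ac)
    then show ?thesis by (simp add: ghost_e_mult_self)
  qed
  have nz: "ghost_e * q x \<noteq> 0" "ghost_e * q w \<noteq> 0"
    using assms ghost_e_mult_eq_0_iff by blast+
  have "CS q b x w
      = (ghost_e * b x w) * (ghost_e * b x w) * e_inv ((ghost_e * q x) * (ghost_e * q w))"
    unfolding CS_def ghost_e_mult2 power2_eq_square by (simp add: mult.assoc)
  also have "\<dots>
      = (ghost_e * b x w) * (ghost_e * b x w) * e_inv (ghost_e * q w) * e_inv (ghost_e * q x)"
    using e_inv_mult[OF ghost_ghost_e_mult nz(1) ghost_ghost_e_mult nz(2)] by (simp add: mult_ac)
  finally show ?thesis .
qed

lemma CS_add_eq_ratio: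
  fixes x y w :: "'v::comm_monoid_add"
  assumes qp: "quadratic_pair sm q b" and nz: "q x \<noteq> 0" "q w \<noteq> (0::'a)"
  defines "A \<equiv> ghost_e * b x w" and "C \<equiv> ghost_e * b y w" and "W \<equiv> ghost_e * q w"
  shows "CS q b (x + y) w = (A * A * e_inv W + C * C * e_inv W)
    * e_inv (ghost_e * q x + ghost_e * q y + ghost_e * b x y)"
proof -
  note Z = quadratic_pair_ghost_e_add[OF qp, of x y]
  have "eR_le (ghost_e * q x) (ghost_e * q (x + y))"
    unfolding Z by (rule eR_le_sum3(2)) (simp_all add: ghost_ghost_e_mult)
  then have "q (x + y) \<noteq> 0" using nz(1) ghost_e_mult_eq_0_iff eR_le_zero by force
  moreover have "ghost_e * b (x + y) w = A + C"
    unfolding A_def C_def quadratic_pair_bilinear_add_left[OF qp] by (simp add: distrib_left)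
  ultimately have "CS q b (x + y) w = (A + C) * (A + C) * e_inv W * e_inv (ghost_e * q (x + y))"
    using CS_eq_ratio[of q "x + y" w b] nz(2) unfolding W_def by simp
  also have "\<dots> = (A * A * e_inv W + C * C * e_inv W)
      * e_inv (ghost_e * q x + ghost_e * q y + ghost_e * b x y)"
    unfolding Z A_def C_def ghost_square_add[OF ghost_ghost_e_mult ghost_ghost_e_mult]
    by (simp add: distrib_right)
  finally show ?thesis .
qed

end

theorem theorem2:
  fixes sm :: "'a::comm_semiring_1 \<Rightarrow> 'v::comm_monoid_add \<Rightarrow> 'v"
    and q :: "'v \<Rightarrow> 'a" and b :: "'v \<Rightarrow> 'v \<Rightarrow> 'a"
    and x y w :: 'v
  assumes "supertropical TYPE('a)"
    and "eR_semifield TYPE('a)"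
    and "(tangible_group::'a set) \<noteq> {ghost_e}"
    and "semimodule sm"
    and "quadratic_pair sm q b"
    and "anisotropic q x" and "anisotropic q y" and "anisotropic q w"
  shows "eR_le (CS q b (x + y) w) (CS q b x w + CS q b y w)
    \<and> (\<not> nu_equiv (q (x + y)) (q x + q y) \<and> CS q b x w + CS q b y w \<noteq> 0
         \<longrightarrow> eR_less (CS q b (x + y) w) (CS q b x w + CS q b y w))
    \<and> (nu_equiv (q (x + y)) (q x + q y) \<and>
         (ghost_e * q x * CS q b y w = ghost_e * q y * CS q b x w
          \<or> CS q b x w = CS q b y w
          \<or> nu_equiv (q x) (q y))
         \<longrightarrow> CS q b (x + y) w = CS q b x w + CS q b y w)"
proof -
  interpret supertropical_semifield "TYPE('a)" using assms(1,2) by unfold_locales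
  define X Y G where "X = ghost_e * q x" and "Y = ghost_e * q y" and "G = ghost_e * b x y"
  define a c where "a = (ghost_e * b x w) * (ghost_e * b x w) * e_inv (ghost_e * q w)"
    and "c = (ghost_e * b y w) * (ghost_e * b y w) * e_inv (ghost_e * q w)"
  have g: "ghost a" "ghost c" "ghost X" "ghost Y" "ghost G"
    unfolding a_def c_def X_def Y_def G_def by (simp_all add: ghost_ghost_e_mult ghost_mult)
  have nz: "X \<noteq> 0" "Y \<noteq> 0" "q x \<noteq> 0" "q y \<noteq> 0" "q w \<noteq> 0"
    using assms(6-8) unfolding X_def Y_def anisotropic_def by (simp_all add: ghost_e_mult_eq_0_iff)
  have CS_x: "CS q b x w = a * e_inv X" and CS_y: "CS q b y w = c * e_inv Y"
    and CS_sum: "CS q b (x + y) w = (a + c) * e_inv (X + Y + G)"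
    using CS_eq_ratio[of q x w b, OF nz(3,5)] CS_eq_ratio[of q y w b, OF nz(4,5)]
      CS_add_eq_ratio[OF assms(5) nz(3,5)]
    unfolding a_def c_def X_def Y_def G_def by (simp_all add: mult_ac)
  have "nu_equiv (q (x + y)) (q x + q y) \<longleftrightarrow> X + Y + G = X + Y"
    unfolding nu_equiv_def quadratic_pair_ghost_e_add[OF assms(5)] X_def Y_def G_def
    by (simp add: distrib_left)
  moreover have "nu_equiv (q x) (q y) \<longleftrightarrow> X = Y"
    unfolding nu_equiv_def X_def Y_def ..
  ultimately show ?thesis
    unfolding CS_sum CS_x CS_y X_def[symmetric] Y_def[symmetric]
    using ratio_sum_le[OF g nz(1,2)] ratio_sum_less[OF g nz(1,2) refl]
      ratio_sum_eq[OF g(1-4) nz(1,2)]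
    by auto
qed

end
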